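(* Let $M,K\ge 1$, let ${\bf U}^c\in\mathbb{C}^{M\times M}$ be unitary, and for $k=1,\dots,K$ let $\boldsymbol{\Lambda}_k\in\mathbb{R}^{M\times M}$ be diagonal with strictly positive diagonal entries. Set $\boldsymbol{\Sigma}_k={\bf U}^c\boldsymbol{\Lambda}_k({\bf U}^c)^{\sf H}$. Consider the problem $$\min_{{\bf U}}\; f({\bf U})=\sum_{m=1}^M\sum_{k=1}^K\log\big({\bf u}_m^{\sf H}\boldsymbol{\Sigma}_k{\bf u}_m\big)\quad\text{subject to}\quad {\bf u}_m^{\sf H}{\bf u}_n=\delta_{m,n}\ \ (m,n\in[M]),$$ where ${\bf u}_1,\dots,{\bf u}_M$ are the columns of ${\bf U}$. Then ${\bf U}^c$ is a global minimizer of this problem, i.e. $f({\bf U}^c)\le f({\bf U})$ for every unitary ${\bf U}\in\mathbb{C}^{M\times M}$.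
   Context: $[M]=\{1,\dots,M\}$, $\delta_{m,n}$ is the Kronecker delta, and ${}^{\sf H}$ denotes conjugate transpose. A matrix ${\bf U}$ is unitary if ${\bf U}^{\sf H}{\bf U}={\bf I}_M$. *)

theory Defs
  imports "HOL-Analysis.Analysis"
begin

definition cadj :: "complex^'n^'m \<Rightarrow> complex^'m^'n" where
  "cadj A = (\<chi> i j. cnj (A $ j $ i))"

definition unitary :: "complex^'n^'n \<Rightarrow> bool" where
  "unitary U \<longleftrightarrow> cadj U ** U = mat 1"

definition diagm :: "('n \<Rightarrow> complex) \<Rightarrow> complex^'n^'n" where
  "diagm d = (\<chi> i j. if i = j then d i else 0)"

definition qform :: "complex^'n \<Rightarrow> complex^'n^'n \<Rightarrow> complex" where
  "qform u A = (\<Sum>i\<in>UNIV. cnj (u $ i) * ((A *v u) $ i))"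

end

theory Submission
  imports Defs
begin

text \<open>Writing \<open>V = (U\<^sup>c)\<^sup>H U\<close>, the quadratic forms of the objective are
  \<open>u\<^sub>m\<^sup>H \<Sigma>\<^sub>k u\<^sub>m = \<Sum>\<^sub>i |V\<^sub>i\<^sub>m|\<^sup>2 \<lambda>\<^sub>k\<^sub>i\<close>. Since \<open>V\<close> is unitary, the matrix \<open>(|V\<^sub>i\<^sub>m|\<^sup>2)\<close> is
  doubly stochastic, so concavity of \<open>ln\<close> applied to each column gives
  \<open>\<Sum>\<^sub>m ln (\<Sum>\<^sub>i |V\<^sub>i\<^sub>m|\<^sup>2 \<lambda>\<^sub>k\<^sub>i) \<ge> \<Sum>\<^sub>m \<Sum>\<^sub>i |V\<^sub>i\<^sub>m|\<^sup>2 ln \<lambda>\<^sub>k\<^sub>i = \<Sum>\<^sub>i ln \<lambda>\<^sub>k\<^sub>i\<close>,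
  using the row sums in the last step. The right-hand side is the value at \<open>V = I\<close>,
  i.e. at \<open>U = U\<^sup>c\<close>.\<close>

lemma sum_ln_le_sum_ln_doubly_stochastic:
  fixes P :: "'n::finite \<Rightarrow> 'n \<Rightarrow> real" and x :: "'n \<Rightarrow> real"
  assumes nonneg: "\<And>i j. P i j \<ge> 0"
    and row_sum: "\<And>i. (\<Sum>j\<in>UNIV. P i j) = 1"
    and col_sum: "\<And>j. (\<Sum>i\<in>UNIV. P i j) = 1"
    and pos: "\<And>i. x i > 0"
  shows "(\<Sum>i\<in>UNIV. ln (x i)) \<le> (\<Sum>j\<in>UNIV. ln (\<Sum>i\<in>UNIV. P i j * x i))"
proof -
  have "(\<Sum>i\<in>UNIV. ln (x i)) = (\<Sum>i\<in>UNIV. \<Sum>j\<in>UNIV. P i j * ln (x i))"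
    by (simp add: row_sum flip: sum_distrib_right)
  also have "\<dots> = (\<Sum>j\<in>UNIV. \<Sum>i\<in>UNIV. P i j * ln (x i))"
    by (rule sum.swap)
  also have "\<dots> \<le> (\<Sum>j\<in>UNIV. ln (\<Sum>i\<in>UNIV. P i j * x i))"
  proof (rule sum_mono)
    fix j
    show "(\<Sum>i\<in>UNIV. P i j * ln (x i)) \<le> ln (\<Sum>i\<in>UNIV. P i j * x i)"
      using concave_on_sum[OF finite UNIV_not_empty ln_concave col_sum] nonneg pos
      by simp
  qed
  finally show ?thesis .
qed

lemma cadj_mult: "cadj ((A::complex^'n^'m) ** (B::complex^'k^'n)) = cadj B ** cadj A"
  by (simp add: cadj_def matrix_matrix_mult_def vec_eq_iff mult.commute)

lemma cadj_cadj [simp]: "cadj (cadj A) = A"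
  by (simp add: cadj_def vec_eq_iff)

lemma unitary_mult_cadj:
  fixes V :: "complex^'n^'n"
  assumes "unitary V"
  shows "V ** cadj V = mat 1"
  using assms matrix_left_right_inverse unfolding unitary_def by blast

lemma unitary_cadj_mult:
  fixes U V :: "complex^'n^'n"
  assumes "unitary U" "unitary V"
  shows "unitary (cadj U ** V)"
proof -
  have "cadj (cadj U ** V) ** (cadj U ** V) = cadj V ** (U ** cadj U) ** V"
    by (simp add: cadj_mult matrix_mul_assoc)
  also have "\<dots> = mat 1"
    using assms by (simp add: unitary_mult_cadj unitary_def)
  finally show ?thesis unfolding unitary_def .
qed

lemma of_real_sum_cmod_square:
  "complex_of_real (\<Sum>i\<in>A. (cmod (z i))\<^sup>2) = (\<Sum>i\<in>A. z i * cnj (z i))"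
  by (simp only: of_real_sum complex_norm_square)

lemma unitary_col_norm_sum:
  fixes V :: "complex^'n^'n"
  assumes "unitary V"
  shows "(\<Sum>i\<in>UNIV. (cmod (V$i$m))\<^sup>2) = 1"
proof -
  have "complex_of_real (\<Sum>i\<in>UNIV. (cmod (V$i$m))\<^sup>2) = (cadj V ** V)$m$m"
    unfolding of_real_sum_cmod_square by (simp add: matrix_matrix_mult_def cadj_def mult.commute)
  also have "\<dots> = 1"
    using assms by (simp add: unitary_def mat_def)
  finally show ?thesis
    by (simp only: of_real_eq_1_iff)
qed

lemma unitary_row_norm_sum:
  fixes V :: "complex^'n^'n"
  assumes "unitary V"
  shows "(\<Sum>m\<in>UNIV. (cmod (V$i$m))\<^sup>2) = 1"
proof -
  have "complex_of_real (\<Sum>m\<in>UNIV. (cmod (V$i$m))\<^sup>2) = (V ** cadj V)$i$i"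
    unfolding of_real_sum_cmod_square by (simp add: matrix_matrix_mult_def cadj_def)
  also have "\<dots> = 1"
    using unitary_mult_cadj[OF assms] by (simp add: mat_def)
  finally show ?thesis
    by (simp only: of_real_eq_1_iff)
qed

lemma sum_cnj_mult_matrix_vector:
  fixes B :: "complex^'n^'m"
  shows "(\<Sum>j\<in>UNIV. cnj (u$j) * (B *v w)$j) = (\<Sum>i\<in>UNIV. cnj ((cadj B *v u)$i) * w$i)"
proof -
  have "(\<Sum>j\<in>UNIV. cnj (u$j) * (B *v w)$j) = (\<Sum>j\<in>UNIV. \<Sum>i\<in>UNIV. cnj (u$j) * B$j$i * w$i)"
    by (simp add: matrix_vector_mult_def sum_distrib_left mult_ac)
  also have "\<dots> = (\<Sum>i\<in>UNIV. \<Sum>j\<in>UNIV. cnj (u$j) * B$j$i * w$i)"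
    by (rule sum.swap)
  also have "\<dots> = (\<Sum>i\<in>UNIV. cnj ((cadj B *v u)$i) * w$i)"
    by (simp add: matrix_vector_mult_def cadj_def sum_distrib_left sum_distrib_right mult_ac)
  finally show ?thesis .
qed

lemma qform_congruence:
  fixes A :: "complex^'n^'m" and B :: "complex^'n^'n"
  shows "qform u (A ** B ** cadj A) = qform (cadj A *v u) B"
proof -
  have "(A ** B ** cadj A) *v u = A *v (B *v (cadj A *v u))"
    by (simp add: matrix_vector_mul_assoc matrix_mul_assoc)
  then show ?thesis
    unfolding qform_def by (simp add: sum_cnj_mult_matrix_vector)
qed

lemma Re_qform_diagm:
  "Re (qform v (diagm (\<lambda>i. complex_of_real (l i)))) = (\<Sum>i\<in>UNIV. l i * (cmod (v$i))\<^sup>2)"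
proof -
  have "cnj (v$i) * (diagm (\<lambda>i. complex_of_real (l i)) *v v)$i
      = complex_of_real (l i * (cmod (v$i))\<^sup>2)" for i
  proof -
    have "(diagm (\<lambda>i. complex_of_real (l i)) *v v)$i = complex_of_real (l i) * v$i"
      by (simp add: diagm_def matrix_vector_mult_def if_distrib[where f="\<lambda>a. a * _"] cong: if_cong)
    then show ?thesis
      using complex_norm_square[of "v$i"] by (simp add: mult_ac)
  qed
  then show ?thesis
    unfolding qform_def by simp
qed

lemma matrix_vector_mult_column: "A *v column m U = column m (A ** U)"
  by (simp add: column_def matrix_vector_mult_def matrix_matrix_mult_def vec_eq_iff)

theorem theorem1:
  fixes Uc :: "complex^'m^'m" and K :: nat and lam :: "nat \<Rightarrow> 'm \<Rightarrow> real"
  assumes "K \<ge> 1"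
    and "unitary Uc"
    and "\<And>k i. k \<in> {1..K} \<Longrightarrow> lam k i > 0"
  defines "Sig \<equiv> (\<lambda>k. Uc ** diagm (\<lambda>i. complex_of_real (lam k i)) ** cadj Uc)"
  defines "f \<equiv> (\<lambda>U::complex^'m^'m. \<Sum>m\<in>UNIV. \<Sum>k=1..K. ln (Re (qform (column m U) (Sig k))))"
  shows "\<forall>U::complex^'m^'m. unitary U \<longrightarrow> f Uc \<le> f U"
proof (intro allI impI)
  fix U :: "complex^'m^'m"
  assume "unitary U"
  define P where "P V i m = (cmod (V$i$m))\<^sup>2" for V :: "complex^'m^'m" and i m
  have f_eq: "f W = (\<Sum>m\<in>UNIV. \<Sum>k=1..K. ln (\<Sum>i\<in>UNIV. P (cadj Uc ** W) i m * lam k i))" for W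
    unfolding f_def Sig_def P_def qform_congruence Re_qform_diagm matrix_vector_mult_column
    by (simp add: column_def mult.commute)
  have "P (mat 1) i m * lam k i = (if i = m then lam k m else 0)" for i m k
    by (simp add: P_def mat_def)
  then have "f Uc = (\<Sum>m\<in>UNIV. \<Sum>k=1..K. ln (lam k m))"
    using f_eq[of Uc] \<open>unitary Uc\<close> by (simp add: unitary_def)
  also have "\<dots> = (\<Sum>k=1..K. \<Sum>i\<in>UNIV. ln (lam k i))"
    by (rule sum.swap)
  also have "\<dots> \<le> (\<Sum>k=1..K. \<Sum>m\<in>UNIV. ln (\<Sum>i\<in>UNIV. P (cadj Uc ** U) i m * lam k i))"
    using unitary_cadj_mult[OF \<open>unitary Uc\<close> \<open>unitary U\<close>] assms(3)
    by (intro sum_mono sum_ln_le_sum_ln_doubly_stochastic)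
      (auto simp: P_def unitary_row_norm_sum unitary_col_norm_sum)
  also have "\<dots> = f U"
    unfolding f_eq by (rule sum.swap)
  finally show "f Uc \<le> f U" .
qed

end
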